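(* Let $U$ be a finite ground set partitioned as $\mathcal{P}=\{U_1,\dots,U_N\}$ and let $\vec p,\vec q\in\mathbb{R}^N_{\ge0}$. For any positive integers $\kappa_1\le\kappa_2$, $$\mathcal{M}_{fair}(\mathcal{P},\kappa_1,\lceil\vec p\kappa_1\rceil,\lceil\vec q\kappa_1\rceil)\subseteq\mathcal{M}_{fair}(\mathcal{P},\kappa_2,\lfloor\vec p\kappa_2\rfloor,\lceil\vec q\kappa_2\rceil).$$
   Context: Fairness matroid: $\mathcal{M}_{fair}(\mathcal{P},\kappa,\vec l,\vec u)=\{S\subseteq U: |S\cap U_c|\le u_c\ \forall c\in[N],\ \sum_{c\in[N]}\max\{|S\cap U_c|,l_c\}\le\kappa\}$. For a vector $\vec v$ and scalar $k$, $\vec v k$ denotes componentwise scaling, and $\lceil\cdot\rceil$, $\lfloor\cdot\rfloor$ are applied componentwise. *)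

theory Defs
  imports Complex_Main "HOL-Library.Disjoint_Sets"
begin

definition is_partition :: "'a set \<Rightarrow> nat \<Rightarrow> (nat \<Rightarrow> 'a set) \<Rightarrow> bool" where
  "is_partition U N P \<longleftrightarrow>
     (\<Union>c\<in>{..<N}. P c) = U \<and> disjoint_family_on P {..<N}"

definition M_fair :: "'a set \<Rightarrow> nat \<Rightarrow> (nat \<Rightarrow> 'a set) \<Rightarrow> int \<Rightarrow> (nat \<Rightarrow> int) \<Rightarrow> (nat \<Rightarrow> int) \<Rightarrow> 'a set set" where
  "M_fair U N P \<kappa> l u =
     {S. S \<subseteq> U \<and> (\<forall>c<N. int (card (S \<inter> P c)) \<le> u c) \<and>
         (\<Sum>c<N. max (int (card (S \<inter> P c))) (l c)) \<le> \<kappa>}"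

end

theory Submission
  imports Defs
begin

text \<open>The upper bounds only grow with \<open>\<kappa>\<close>, so the content lies in the budget constraint.
  If \<open>S\<close> fits the budget \<open>\<kappa>\<^sub>1\<close> with lower bounds \<open>\<lceil>p\<^sub>c \<kappa>\<^sub>1\<rceil>\<close>, then
  \<open>\<kappa>\<^sub>1 \<Sum>\<^sub>c p\<^sub>c \<le> \<kappa>\<^sub>1\<close>, i.e. \<open>\<Sum>\<^sub>c p\<^sub>c \<le> 1\<close>. Passing from \<open>\<lceil>p\<^sub>c \<kappa>\<^sub>1\<rceil>\<close> to \<open>\<lfloor>p\<^sub>c \<kappa>\<^sub>2\<rfloor>\<close> raises
  each summand by at most \<open>p\<^sub>c (\<kappa>\<^sub>2 - \<kappa>\<^sub>1)\<close>, hence the whole sum by at most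
  \<open>\<kappa>\<^sub>2 - \<kappa>\<^sub>1\<close>.\<close>

lemma sum_le_one_if_sum_max_ceiling_le:
  fixes x :: "'i \<Rightarrow> int" and p :: "'i \<Rightarrow> real" and k :: real
  assumes "0 < k" and budget: "of_int (\<Sum>c\<in>I. max (x c) \<lceil>p c * k\<rceil>) \<le> k"
  shows "sum p I \<le> 1"
proof -
  have "k * sum p I = (\<Sum>c\<in>I. p c * k)"
    by (simp add: sum_distrib_left mult.commute)
  also have "\<dots> \<le> (\<Sum>c\<in>I. of_int (max (x c) \<lceil>p c * k\<rceil>))"
    by (rule sum_mono, rule order_trans[OF le_of_int_ceiling]) simp
  also have "\<dots> \<le> k"
    using budget by simp
  finally show ?thesis
    using \<open>0 < k\<close> by simp
qed

lemma max_floor_le_max_ceiling_add: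
  fixes x :: int and p a b :: real
  assumes "0 \<le> p" and "a \<le> b"
  shows "of_int (max x \<lfloor>p * b\<rfloor>) \<le> of_int (max x \<lceil>p * a\<rceil>) + p * (b - a)"
proof -
  have "0 \<le> p * (b - a)"
    using assms by simp
  moreover have "real_of_int x \<le> of_int (max x \<lceil>p * a\<rceil>)"
    by simp
  moreover have "of_int \<lfloor>p * b\<rfloor> \<le> p * a + p * (b - a)"
    by (simp add: right_diff_distrib)
  moreover have "p * a \<le> of_int (max x \<lceil>p * a\<rceil>)"
    by (rule order_trans[OF le_of_int_ceiling]) simp
  ultimately show ?thesis
    unfolding of_int_max max.bounded_iff by linarith
qed

lemma sum_max_floor_le_if_sum_max_ceiling_le:
  fixes x :: "'i \<Rightarrow> int" and p :: "'i \<Rightarrow> real" and k\<^sub>1 k\<^sub>2 :: real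
  assumes p_nonneg: "\<forall>c\<in>I. 0 \<le> p c" and "0 < k\<^sub>1" and "k\<^sub>1 \<le> k\<^sub>2"
    and budget: "of_int (\<Sum>c\<in>I. max (x c) \<lceil>p c * k\<^sub>1\<rceil>) \<le> k\<^sub>1"
  shows "of_int (\<Sum>c\<in>I. max (x c) \<lfloor>p c * k\<^sub>2\<rfloor>) \<le> k\<^sub>2"
proof -
  have "sum p I \<le> 1"
    using \<open>0 < k\<^sub>1\<close> budget by (rule sum_le_one_if_sum_max_ceiling_le)
  have "of_int (\<Sum>c\<in>I. max (x c) \<lfloor>p c * k\<^sub>2\<rfloor>)
      \<le> (\<Sum>c\<in>I. of_int (max (x c) \<lceil>p c * k\<^sub>1\<rceil>) + p c * (k\<^sub>2 - k\<^sub>1))"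
    unfolding of_int_sum
    by (rule sum_mono) (use p_nonneg \<open>k\<^sub>1 \<le> k\<^sub>2\<close> max_floor_le_max_ceiling_add in auto)
  also have "\<dots> = of_int (\<Sum>c\<in>I. max (x c) \<lceil>p c * k\<^sub>1\<rceil>) + sum p I * (k\<^sub>2 - k\<^sub>1)"
    by (simp add: sum.distrib sum_distrib_right)
  also have "\<dots> \<le> k\<^sub>1 + 1 * (k\<^sub>2 - k\<^sub>1)"
    using budget \<open>sum p I \<le> 1\<close> \<open>k\<^sub>1 \<le> k\<^sub>2\<close> by (intro add_mono mult_right_mono) auto
  finally show ?thesis
    by simp
qed

theorem lemma5:
  fixes U :: "'a set" and N :: nat and P :: "nat \<Rightarrow> 'a set"
    and p q :: "nat \<Rightarrow> real" and \<kappa>1 \<kappa>2 :: nat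
  assumes "finite U"
    and "is_partition U N P"
    and "\<forall>c<N. p c \<ge> 0" and "\<forall>c<N. q c \<ge> 0"
    and "0 < \<kappa>1" and "\<kappa>1 \<le> \<kappa>2"
  shows "M_fair U N P (int \<kappa>1) (\<lambda>c. \<lceil>p c * real \<kappa>1\<rceil>) (\<lambda>c. \<lceil>q c * real \<kappa>1\<rceil>)
         \<subseteq> M_fair U N P (int \<kappa>2) (\<lambda>c. \<lfloor>p c * real \<kappa>2\<rfloor>) (\<lambda>c. \<lceil>q c * real \<kappa>2\<rceil>)"
proof
  fix S
  assume "S \<in> M_fair U N P (int \<kappa>1) (\<lambda>c. \<lceil>p c * real \<kappa>1\<rceil>) (\<lambda>c. \<lceil>q c * real \<kappa>1\<rceil>)"
  then have "S \<subseteq> U"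
    and upper: "\<forall>c<N. int (card (S \<inter> P c)) \<le> \<lceil>q c * real \<kappa>1\<rceil>"
    and budget: "(\<Sum>c<N. max (int (card (S \<inter> P c))) \<lceil>p c * real \<kappa>1\<rceil>) \<le> int \<kappa>1"
    by (auto simp: M_fair_def)
  have "\<lceil>q c * real \<kappa>1\<rceil> \<le> \<lceil>q c * real \<kappa>2\<rceil>" if "c < N" for c
    using assms(4,6) that by (intro ceiling_mono mult_left_mono) auto
  with upper have "\<forall>c<N. int (card (S \<inter> P c)) \<le> \<lceil>q c * real \<kappa>2\<rceil>"
    by force
  moreover
  have "real_of_int (\<Sum>c<N. max (int (card (S \<inter> P c))) \<lceil>p c * real \<kappa>1\<rceil>) \<le> real \<kappa>1"
    using budget by (metis of_int_le_iff of_int_of_nat_eq)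
  then have "real_of_int (\<Sum>c<N. max (int (card (S \<inter> P c))) \<lfloor>p c * real \<kappa>2\<rfloor>) \<le> real \<kappa>2"
    using assms(3,5,6) by (intro sum_max_floor_le_if_sum_max_ceiling_le) auto
  then have "(\<Sum>c<N. max (int (card (S \<inter> P c))) \<lfloor>p c * real \<kappa>2\<rfloor>) \<le> int \<kappa>2"
    by (metis of_int_le_iff of_int_of_nat_eq)
  ultimately show "S \<in> M_fair U N P (int \<kappa>2) (\<lambda>c. \<lfloor>p c * real \<kappa>2\<rfloor>) (\<lambda>c. \<lceil>q c * real \<kappa>2\<rceil>)"
    using \<open>S \<subseteq> U\<close> by (simp add: M_fair_def)
qed

end
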